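(* Let $(\Omega,\mathcal F,P)$ be a probability space and let $(X_x)_{x\in\mathbb{R}}$ be a jointly measurable family of non-negative random variables which are identically distributed and non-trivial (i.e. $P(X_x>0)>0$). Let $f:\mathbb{R}\to[0,\infty)$ be measurable. If $P\big(\int_{\mathbb{R}} f(x)X_x\,dx<\infty\big)=1$, then $\int_{\mathbb{R}} f(x)\,dx<\infty$. *)

theory Defs
  imports "HOL-Probability.Probability"
begin

end

theory Submission
  imports Defs
begin

text \<open>Choose a level \<open>c > 0\<close> with \<open>p = P(X\<^sub>x > c) > 0\<close>; by identical distribution
  \<open>p\<close> does not depend on \<open>x\<close>. Since \<open>Y = \<integral> f(x) X\<^sub>x dx\<close> is almost surely finite, some
  event \<open>B = {Y \<le> K}\<close> has probability \<open>> 1 - p/2\<close>, hence \<open>P({X\<^sub>x > c} \<inter> B) \<ge> p/2\<close> for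
  every \<open>x\<close>. Tonelli then gives \<open>c (p/2) \<integral> f \<le> E[Y; B] \<le> K\<close>.\<close>

lemma measurable_Pair_section:
  assumes "(\<lambda>(x, y). g x y) \<in> measurable (N \<Otimes>\<^sub>M M) K" and "x \<in> space N"
  shows "g x \<in> measurable M K"
  using measurable_compose[OF measurable_Pair1'[OF assms(2)] assms(1)] by simp

lemma (in finite_measure) measure_level_set_posE:
  assumes [measurable]: "Z \<in> borel_measurable M"
    and pos: "0 < measure M {\<omega> \<in> space M. 0 < Z \<omega>}"
  obtains c :: real where "0 < c" and "0 < measure M {\<omega> \<in> space M. c < Z \<omega>}"
proof -
  define A where "A n = {\<omega> \<in> space M. 1 / Suc n < Z \<omega>}" for n :: nat
  have "incseq A"
    unfolding incseq_def A_def le_fun_def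
    by (auto intro: le_less_trans[rotated] simp: frac_le)
  moreover have "range A \<subseteq> sets M"
    by (auto simp: A_def)
  ultimately have lim: "(\<lambda>n. measure M (A n)) \<longlonglongrightarrow> measure M (\<Union>n. A n)"
    by (rule finite_Lim_measure_incseq[rotated])
  have "(\<Union>n. A n) = {\<omega> \<in> space M. 0 < Z \<omega>}"
    unfolding A_def
    by (auto elim!: nat_approx_posE simp: inverse_eq_divide intro: order.strict_trans[rotated])
  with lim pos have "eventually (\<lambda>n. 0 < measure M (A n)) sequentially"
    by (intro order_tendstoD(1)) auto
  then obtain n where "0 < measure M (A n)"
    by (auto simp: eventually_sequentially)
  then show thesis
    by (intro that[of "1 / Suc n"]) (simp_all add: A_def)
qed

lemma (in prob_space) prob_le_of_nat_tendsto_1: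
  fixes Y :: "'a \<Rightarrow> ennreal"
  assumes [measurable]: "Y \<in> borel_measurable M"
    and finite_ae: "prob {\<omega> \<in> space M. Y \<omega> < \<infinity>} = 1"
  shows "(\<lambda>n. prob {\<omega> \<in> space M. Y \<omega> \<le> of_nat n}) \<longlonglongrightarrow> 1"
proof -
  have "incseq (\<lambda>n. {\<omega> \<in> space M. Y \<omega> \<le> of_nat n})"
    unfolding incseq_def by (auto intro: order_trans)
  then have "(\<lambda>n. prob {\<omega> \<in> space M. Y \<omega> \<le> of_nat n}) \<longlonglongrightarrow> prob (\<Union>n. {\<omega> \<in> space M. Y \<omega> \<le> of_nat n})"
    by (intro finite_Lim_measure_incseq) auto
  moreover have "(\<Union>n. {\<omega> \<in> space M. Y \<omega> \<le> of_nat n}) = {\<omega> \<in> space M. Y \<omega> < \<infinity>}"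
    by (auto intro: le_less_trans[OF _ of_nat_less_top] less_imp_le elim!: ennreal_Ex_less_of_nat[THEN exE])
  ultimately show ?thesis
    using finite_ae by simp
qed

lemma (in prob_space) prob_Int_ge:
  assumes "A \<in> events" and "B \<in> events"
  shows "prob A + prob B - 1 \<le> prob (A \<inter> B)"
  using measure_Un3[of A M B] prob_le_1[of "A \<union> B"] assms by (simp add: fmeasurable_eq_sets)

lemma measure_vimage_eq_if_distr_eq:
  assumes "distr M borel X = distr M borel Z"
    and "X \<in> borel_measurable M" and "Z \<in> borel_measurable M" and "A \<in> sets borel"
  shows "measure M (X -` A \<inter> space M) = measure M (Z -` A \<inter> space M)"
  using assms by (metis measure_distr)

lemma (in sigma_finite_measure) borel_measurable_nn_integral_weighted:
  fixes X :: "'a \<Rightarrow> 'b \<Rightarrow> real"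
  assumes "(\<lambda>(x, \<omega>). X x \<omega>) \<in> borel_measurable (M \<Otimes>\<^sub>M N)" and [measurable]: "f \<in> borel_measurable M"
  shows "(\<lambda>\<omega>. \<integral>\<^sup>+ x. ennreal (f x * X x \<omega>) \<partial>M) \<in> borel_measurable N"
proof -
  have [measurable]: "(\<lambda>(\<omega>, x). X x \<omega>) \<in> borel_measurable (N \<Otimes>\<^sub>M M)"
    using measurable_pair_swap[OF assms(1)] by (simp add: case_prod_beta)
  show ?thesis
    by measurable
qed

lemma (in prob_space) nn_integral_le_of_level_prob:
  fixes N :: "'b measure" and X :: "'b \<Rightarrow> 'a \<Rightarrow> real"
  assumes "sigma_finite_measure N"
    and joint[measurable]: "(\<lambda>(x, \<omega>). X x \<omega>) \<in> borel_measurable (N \<Otimes>\<^sub>M M)"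
    and [measurable]: "f \<in> borel_measurable N" and f_nonneg: "\<And>x. 0 \<le> f x"
    and "0 \<le> c" and [measurable]: "B \<in> events"
    and level: "\<And>x. x \<in> space N \<Longrightarrow> q \<le> prob ({\<omega> \<in> space M. c < X x \<omega>} \<inter> B)"
    and bound: "\<And>\<omega>. \<omega> \<in> B \<Longrightarrow> (\<integral>\<^sup>+ x. ennreal (f x * X x \<omega>) \<partial>N) \<le> K"
  shows "ennreal (c * q) * (\<integral>\<^sup>+ x. ennreal (f x) \<partial>N) \<le> K"
proof -
  interpret N: sigma_finite_measure N by fact
  interpret pair_sigma_finite N M ..
  let ?g = "\<lambda>x \<omega>. indicator B \<omega> * ennreal (f x * X x \<omega>)"
  have pointwise: "ennreal (c * q) * ennreal (f x) \<le> (\<integral>\<^sup>+ \<omega>. ?g x \<omega> \<partial>M)" if "x \<in> space N" for x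
  proof -
    let ?A = "{\<omega> \<in> space M. c < X x \<omega>} \<inter> B"
    have [measurable]: "X x \<in> borel_measurable M"
      using measurable_Pair_section[OF joint that] .
    have "ennreal (c * q) * ennreal (f x) = ennreal (c * q * f x)"
      using f_nonneg by (simp add: ennreal_mult'')
    also have "\<dots> \<le> ennreal (f x * c * prob ?A)"
      using mult_left_mono[OF level[OF that], of "f x * c"] \<open>0 \<le> c\<close> f_nonneg
      by (intro ennreal_leI) (simp add: mult_ac)
    also have "\<dots> = (\<integral>\<^sup>+ \<omega>. ennreal (f x * c) * indicator ?A \<omega> \<partial>M)"
      using \<open>0 \<le> c\<close> f_nonneg by (simp add: ennreal_mult emeasure_eq_measure nn_integral_cmult_indicator)
    also have "\<dots> \<le> (\<integral>\<^sup>+ \<omega>. ?g x \<omega> \<partial>M)"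
      using \<open>0 \<le> c\<close> f_nonneg
      by (intro nn_integral_mono) (auto simp: indicator_def intro!: ennreal_leI mult_left_mono)
    finally show ?thesis .
  qed
  have "ennreal (c * q) * (\<integral>\<^sup>+ x. ennreal (f x) \<partial>N) = (\<integral>\<^sup>+ x. ennreal (c * q) * ennreal (f x) \<partial>N)"
    by (simp add: nn_integral_cmult)
  also have "\<dots> \<le> (\<integral>\<^sup>+ x. (\<integral>\<^sup>+ \<omega>. ?g x \<omega> \<partial>M) \<partial>N)"
    by (intro nn_integral_mono pointwise)
  also have "\<dots> = (\<integral>\<^sup>+ \<omega>. (\<integral>\<^sup>+ x. ?g x \<omega> \<partial>N) \<partial>M)"
    by (rule Fubini'[symmetric]) measurable
  also have "\<dots> \<le> (\<integral>\<^sup>+ \<omega>. K \<partial>M)"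
    using bound by (intro nn_integral_mono) (auto simp: indicator_def)
  also have "\<dots> = K"
    by (simp add: emeasure_space_1)
  finally show ?thesis .
qed

lemma ennreal_less_top_if_mult_le:
  fixes a b c :: ennreal
  assumes "a * b \<le> c" and "a \<noteq> 0" and "c < \<top>"
  shows "b < \<top>"
  using le_less_trans[OF assms(1,3)] assms(2) by (auto simp: ennreal_mult_less_top)

theorem lemma1:
  fixes M :: "'a measure" and X :: "real \<Rightarrow> 'a \<Rightarrow> real" and f :: "real \<Rightarrow> real"
  assumes "prob_space M"
    and joint: "(\<lambda>(x, \<omega>). X x \<omega>) \<in> borel_measurable (lborel \<Otimes>\<^sub>M M)"
    and nonneg: "\<And>x \<omega>. \<omega> \<in> space M \<Longrightarrow> X x \<omega> \<ge> 0"
    and ident: "\<And>x y. distr M borel (X x) = distr M borel (X y)"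
    and nontriv: "\<And>x. measure M {\<omega> \<in> space M. X x \<omega> > 0} > 0"
    and f_meas: "f \<in> borel_measurable borel"
    and f_nonneg: "\<And>x. f x \<ge> 0"
    and fin: "measure M {\<omega> \<in> space M. (\<integral>\<^sup>+ x. ennreal (f x * X x \<omega>) \<partial>lborel) < \<infinity>} = 1"
  shows "(\<integral>\<^sup>+ x. ennreal (f x) \<partial>lborel) < \<infinity>"
proof -
  interpret prob_space M by fact
  have X_meas: "X x \<in> borel_measurable M" for x
    using measurable_Pair_section[OF joint] by simp
  obtain c where "0 < c" and "0 < prob {\<omega> \<in> space M. c < X 0 \<omega>}"
    using measure_level_set_posE[OF X_meas nontriv] by blast
  moreover define p where "p = prob {\<omega> \<in> space M. c < X 0 \<omega>}"
  ultimately have "0 < p" by simp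
  have level_prob: "prob {\<omega> \<in> space M. c < X x \<omega>} = p" for x
    using measure_vimage_eq_if_distr_eq[OF ident X_meas X_meas, of "{c<..}" x 0]
    by (simp add: p_def vimage_def Int_def conj_commute)
  define Y where "Y \<omega> = (\<integral>\<^sup>+ x. ennreal (f x * X x \<omega>) \<partial>lborel)" for \<omega>
  have [measurable]: "f \<in> borel_measurable lborel"
    using f_meas by simp
  have Y_meas[measurable]: "Y \<in> borel_measurable M"
    unfolding Y_def using lborel.borel_measurable_nn_integral_weighted[OF joint] by simp
  from order_tendstoD(1)[OF prob_le_of_nat_tendsto_1[OF Y_meas fin[folded Y_def]], of "1 - p / 2"]
  obtain K :: nat where K: "1 - p / 2 < prob {\<omega> \<in> space M. Y \<omega> \<le> of_nat K}"
    using \<open>0 < p\<close> by (auto simp: eventually_sequentially)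
  define B where "B = {\<omega> \<in> space M. Y \<omega> \<le> of_nat K}"
  have "B \<in> events"
    unfolding B_def by measurable
  have "p / 2 \<le> prob ({\<omega> \<in> space M. c < X x \<omega>} \<inter> B)" for x
    using prob_Int_ge[of "{\<omega> \<in> space M. c < X x \<omega>}" B] \<open>B \<in> events\<close> level_prob[of x] K X_meas
    by (simp add: B_def)
  then have "ennreal (c * (p / 2)) * (\<integral>\<^sup>+ x. ennreal (f x) \<partial>lborel) \<le> of_nat K"
    using \<open>0 < c\<close> \<open>B \<in> events\<close>
    by (intro nn_integral_le_of_level_prob[OF lborel.sigma_finite_measure_axioms joint])
       (auto simp: f_nonneg B_def Y_def)
  moreover have "ennreal (c * (p / 2)) \<noteq> 0"
    using \<open>0 < c\<close> \<open>0 < p\<close> by simp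
  ultimately show ?thesis
    using ennreal_less_top_if_mult_le[OF _ _ of_nat_less_top] by simp
qed

end
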